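(* Let $x,y\in\mathrm{Cay}$. The following are equivalent: (1) $[x]\ge[y]$; (2) for each $x'\in[x]$ there exists $y'\in[y]$ such that $x'\ge y'$.
   Context: A Cayley permutation is a word of positive integers in which every integer from $1$ to its maximum occurs; $\mathrm{Cay}$ is the set of all of them. Containment $y\le x$: indices $i_1<\dots<i_k$ ($k$ the length of $y$) with $x(i_s)<x(i_t)\iff y(s)<y(t)$ and $x(i_s)=x(i_t)\iff y(s)=y(t)$. For $x$ of length $n$, $\gamma(x)$ is the permutation obtained by sorting the pairs $(x(i),i)$ increasingly by first coordinate, ties by decreasing second coordinate, and reading the second coordinates. $x\sim y$ iff $\gamma(x)=\gamma(y)$; $[x]$ is the class of $x$. For classes, $[x]\ge[y]$ iff $x'\ge y'$ for some $x'\in[x]$ and $y'\in[y]$. *)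

theory Defs
  imports Main "HOL-Library.Product_Lexorder"
begin

text \<open>Words are lists of naturals, positions are 0-based.\<close>

definition Cay :: "nat list set" where
  "Cay = {x. 0 \<notin> set x \<and> (\<forall>k. 1 \<le> k \<and> k \<le> Max (insert 0 (set x)) \<longrightarrow> k \<in> set x)}"

definition contains :: "nat list \<Rightarrow> nat list \<Rightarrow> bool" where
  "contains x y \<longleftrightarrow> (\<exists>is. length is = length y \<and> sorted_wrt (<) is \<and> (\<forall>i\<in>set is. i < length x) \<and>
     (\<forall>s<length y. \<forall>t<length y.
        (x ! (is ! s) < x ! (is ! t) \<longleftrightarrow> y ! s < y ! t) \<and>
        (x ! (is ! s) = x ! (is ! t) \<longleftrightarrow> y ! s = y ! t)))"

text \<open>gamma: sort positions i by (x(i), -i) increasingly, i.e. by value ascending,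
  ties by position descending; read off the positions.\<close>
definition gamma :: "nat list \<Rightarrow> nat list" where
  "gamma x = sort_key (\<lambda>i. (x ! i, length x - i)) [0..<length x]"

definition cls :: "nat list \<Rightarrow> nat list set" where
  "cls x = {x'. x' \<in> Cay \<and> gamma x' = gamma x}"

definition cls_ge :: "nat list set \<Rightarrow> nat list set \<Rightarrow> bool" where
  "cls_ge X Y \<longleftrightarrow> (\<exists>x'\<in>X. \<exists>y'\<in>Y. contains x' y')"

end

theory Submission
  imports Defs "HOL-Library.Multiset"
begin

text \<open>Ties in \<open>gamma\<close> are broken by decreasing position, so \<open>gamma x\<close> records, for
  every pair of positions \<open>i < j\<close>, exactly whether \<open>x(i) < x(j)\<close>. Hence \<open>x \<sim> x'\<close> means
  that \<open>x\<close> and \<open>x'\<close> have the same length and the same strict ascents, a property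
  inherited by the subwords at any common set of positions. If \<open>x'\<close> contains \<open>y'\<close> at
  positions \<open>I\<close> and \<open>x'' \<sim> x'\<close>, then the standardization of the subword of \<open>x''\<close> at
  \<open>I\<close> is contained in \<open>x''\<close> and equivalent to \<open>y'\<close>.\<close>

lemma strict_sorted_nth_less_iff:
  fixes xs :: "'a::linorder list"
  assumes "sorted_wrt (<) xs" "i < length xs" "j < length xs"
  shows "xs ! i < xs ! j \<longleftrightarrow> i < j"
  using sorted_wrt_nth_less[OF assms(1), of i j] sorted_wrt_nth_less[OF assms(1), of j i] assms
  by (cases i j rule: linorder_cases) auto

lemma sort_key_eq_iff:
  fixes f :: "'a \<Rightarrow> 'b::linorder" and g :: "'a \<Rightarrow> 'c::linorder"
  assumes "distinct xs" and inj_f: "inj_on f (set xs)" and "inj_on g (set xs)"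
  shows "sort_key f xs = sort_key g xs \<longleftrightarrow> (\<forall>i\<in>set xs. \<forall>j\<in>set xs. f i < f j \<longleftrightarrow> g i < g j)"
proof
  assume same: "sort_key f xs = sort_key g xs"
  define L where "L = sort_key f xs"
  have "sorted_wrt (<) (map f L)" "sorted_wrt (<) (map g L)"
    using assms same sorted_sort_key[of f xs] sorted_sort_key[of g xs]
    by (auto simp: L_def strict_sorted_iff distinct_map simp del: sorted_map)
  then have "f (L ! u) < f (L ! v) \<longleftrightarrow> g (L ! u) < g (L ! v)"
    if "u < length L" "v < length L" for u v
    using strict_sorted_nth_less_iff[of "map f L" u v] strict_sorted_nth_less_iff[of "map g L" u v]
      that by simp
  then show "\<forall>i\<in>set xs. \<forall>j\<in>set xs. f i < f j \<longleftrightarrow> g i < g j"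
    by (metis L_def in_set_conv_nth set_sort)
next
  assume agree: "\<forall>i\<in>set xs. \<forall>j\<in>set xs. f i < f j \<longleftrightarrow> g i < g j"
  have "sorted_wrt (\<lambda>i j. g i \<le> g j) (sort_key g xs)"
    using sorted_sort_key[of g xs] unfolding sorted_map .
  then have "sorted (map f (sort_key g xs))"
    by (auto simp: sorted_map elim!: sorted_wrt_mono_rel[rotated]) (meson agree not_le)
  then show "sort_key f xs = sort_key g xs"
    using inj_f by (intro sort_key_inj_key_eq) simp_all
qed

lemma length_gamma [simp]: "length (gamma x) = length x"
  by (simp add: gamma_def)

lemma gamma_key_less_iff:
  fixes a b i j n :: nat
  assumes "i < j" "j < n"
  shows "(a, n - i) < (b, n - j) \<longleftrightarrow> a < b"
    and "(b, n - j) < (a, n - i) \<longleftrightarrow> \<not> a < b"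
proof -
  have "n - j < n - i"
    using assms by linarith
  then show "(a, n - i) < (b, n - j) \<longleftrightarrow> a < b" and "(b, n - j) < (a, n - i) \<longleftrightarrow> \<not> a < b"
    by (auto simp: less_prod_def)
qed

lemma gamma_eq_iff:
  "gamma a = gamma b \<longleftrightarrow>
     length a = length b \<and> (\<forall>i j. i < j \<longrightarrow> j < length a \<longrightarrow> (a ! i < a ! j \<longleftrightarrow> b ! i < b ! j))"
proof (cases "length a = length b")
  case True
  define n where "n = length a"
  let ?ka = "\<lambda>i. (a ! i, n - i)" and ?kb = "\<lambda>i. (b ! i, n - i)"
  have inj: "inj_on ?ka {0..<n}" "inj_on ?kb {0..<n}"
    by (auto intro!: inj_onI)
  have "gamma a = gamma b \<longleftrightarrow> sort_key ?ka [0..<n] = sort_key ?kb [0..<n]"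
    by (simp add: gamma_def n_def True)
  also have "\<dots> \<longleftrightarrow> (\<forall>i\<in>{0..<n}. \<forall>j\<in>{0..<n}. ?ka i < ?ka j \<longleftrightarrow> ?kb i < ?kb j)"
    (is "_ \<longleftrightarrow> ?keys")
    using sort_key_eq_iff[OF distinct_upt inj[folded set_upt]] unfolding set_upt .
  also have "?keys \<longleftrightarrow> (\<forall>i j. i < j \<longrightarrow> j < n \<longrightarrow> (a ! i < a ! j \<longleftrightarrow> b ! i < b ! j))"
    (is "_ \<longleftrightarrow> ?ascents")
  proof
    assume ?keys
    show ?ascents
    proof (intro allI impI)
      fix i j assume ij: "i < j" "j < n"
      then have "i \<in> {0..<n}" "j \<in> {0..<n}"
        by auto
      then have "?ka i < ?ka j \<longleftrightarrow> ?kb i < ?kb j"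
        using \<open>?keys\<close> by blast
      then show "a ! i < a ! j \<longleftrightarrow> b ! i < b ! j"
        unfolding gamma_key_less_iff(1)[OF ij] .
    qed
  next
    assume ?ascents
    show ?keys
    proof (intro ballI)
      fix i j assume "i \<in> {0..<n}" "j \<in> {0..<n}"
      then consider (less) "i < j" "j < n" | (equal) "i = j" | (greater) "j < i" "i < n"
        by fastforce
      then show "?ka i < ?ka j \<longleftrightarrow> ?kb i < ?kb j"
      proof cases
        case less
        then show ?thesis
          unfolding gamma_key_less_iff(1)[OF less] using \<open>?ascents\<close> by blast
      next
        case equal
        then show ?thesis by simp
      next
        case greater
        then show ?thesis
          unfolding gamma_key_less_iff(2)[OF greater] using \<open>?ascents\<close> by blast
      qed
    qed
  qed
  finally show ?thesis
    using True n_def by simp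
qed (metis length_gamma)

lemma gamma_eq_map_nth:
  assumes "gamma a = gamma b" "sorted_wrt (<) is" "\<forall>i\<in>set is. i < length a"
  shows "gamma (map ((!) a) is) = gamma (map ((!) b) is)"
proof -
  have asc: "\<forall>i j. i < j \<longrightarrow> j < length a \<longrightarrow> (a ! i < a ! j \<longleftrightarrow> b ! i < b ! j)"
    using assms(1) unfolding gamma_eq_iff by blast
  have "a ! (is ! s) < a ! (is ! t) \<longleftrightarrow> b ! (is ! s) < b ! (is ! t)"
    if "s < t" "t < length is" for s t
  proof -
    have "is ! s < is ! t"
      using sorted_wrt_nth_less[OF assms(2) that] .
    moreover have "is ! t < length a"
      using assms(3) that(2) nth_mem by blast
    ultimately show ?thesis
      using asc by blast
  qed
  then show ?thesis
    unfolding gamma_eq_iff by simp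
qed

definition order_iso :: "nat list \<Rightarrow> nat list \<Rightarrow> bool" where
  "order_iso u v \<longleftrightarrow> length u = length v \<and>
     (\<forall>s<length u. \<forall>t<length u. (u ! s < u ! t \<longleftrightarrow> v ! s < v ! t) \<and> (u ! s = u ! t \<longleftrightarrow> v ! s = v ! t))"

lemma gamma_eq_if_order_iso: "order_iso u v \<Longrightarrow> gamma u = gamma v"
  by (auto simp: gamma_eq_iff order_iso_def)

lemma contains_iff_order_iso:
  "contains x y \<longleftrightarrow>
     (\<exists>is. sorted_wrt (<) is \<and> (\<forall>i\<in>set is. i < length x) \<and> order_iso (map ((!) x) is) y)"
  unfolding contains_def order_iso_def by (rule ex_cong1) auto

definition rank :: "nat list \<Rightarrow> nat \<Rightarrow> nat" where
  "rank w v = card {u \<in> set w. u \<le> v}"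

definition std :: "nat list \<Rightarrow> nat list" where
  "std w = map (rank w) w"

lemma rank_strict_mono:
  assumes "v \<in> set w" "v' \<in> set w" "v < v'"
  shows "rank w v < rank w v'"
proof -
  have "{u \<in> set w. u \<le> v} \<subseteq> {u \<in> set w. u \<le> v'}"
    and "v' \<in> {u \<in> set w. u \<le> v'} - {u \<in> set w. u \<le> v}"
    using assms by auto
  then have "{u \<in> set w. u \<le> v} \<subset> {u \<in> set w. u \<le> v'}"
    by blast
  then show ?thesis
    unfolding rank_def by (intro psubset_card_mono) auto
qed

lemma rank_less_iff:
  assumes "v \<in> set w" "v' \<in> set w"
  shows "rank w v < rank w v' \<longleftrightarrow> v < v'"
  using rank_strict_mono[OF assms] rank_strict_mono[OF assms(2,1)]
  by (cases v v' rule: linorder_cases) auto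

lemma order_iso_std: "order_iso w (std w)"
  using rank_less_iff by (auto simp: order_iso_def std_def) (metis nth_mem nat_neq_iff)

lemma set_std: "set (std w) = {1..card (set w)}"
proof -
  have "inj_on (rank w) (set w)"
    by (rule inj_onI) (metis rank_less_iff nat_neq_iff)
  moreover have "rank w ` set w \<subseteq> {1..card (set w)}"
    by (force simp: rank_def Suc_le_eq card_gt_0_iff intro: card_mono)
  ultimately show ?thesis
    unfolding std_def by (simp add: card_subset_eq card_image)
qed

lemma Cay_if_set_eq_interval:
  assumes "set z = {1..m}"
  shows "z \<in> Cay"
proof -
  have "Max (insert 0 {1..m}) = m"
    by (rule Max_eqI) auto
  then show ?thesis
    using assms by (simp add: Cay_def)
qed

lemma std_in_Cay: "std w \<in> Cay"
  by (rule Cay_if_set_eq_interval[OF set_std])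

theorem lemma4p14:
  assumes "x \<in> Cay" and "y \<in> Cay"
  shows "cls_ge (cls x) (cls y) \<longleftrightarrow> (\<forall>x'\<in>cls x. \<exists>y'\<in>cls y. contains x' y')"
proof
  assume "cls_ge (cls x) (cls y)"
  then obtain x' y' "is" where x': "x' \<in> cls x" and y': "y' \<in> cls y"
    and is_sorted: "sorted_wrt (<) is" and is_bound: "\<forall>i\<in>set is. i < length x'"
    and iso: "order_iso (map ((!) x') is) y'"
    unfolding cls_ge_def contains_iff_order_iso by blast
  show "\<forall>x''\<in>cls x. \<exists>y''\<in>cls y. contains x'' y''"
  proof
    fix x'' assume "x'' \<in> cls x"
    then have same: "gamma x'' = gamma x'"
      using x' by (simp add: cls_def)
    then have "length x'' = length x'"
      by (metis length_gamma)
    define w where "w = map ((!) x'') is"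
    have "gamma w = gamma (map ((!) x') is)"
      unfolding w_def using gamma_eq_map_nth[OF same is_sorted] is_bound \<open>length x'' = length x'\<close>
      by simp
    also have "\<dots> = gamma y'"
      by (rule gamma_eq_if_order_iso[OF iso])
    finally have "std w \<in> cls y"
      using y' std_in_Cay gamma_eq_if_order_iso[OF order_iso_std] by (simp add: cls_def)
    moreover have "contains x'' (std w)"
      unfolding contains_iff_order_iso w_def
      using is_sorted is_bound order_iso_std \<open>length x'' = length x'\<close> by auto
    ultimately show "\<exists>y''\<in>cls y. contains x'' y''"
      by blast
  qed
next
  assume "\<forall>x'\<in>cls x. \<exists>y'\<in>cls y. contains x' y'"
  moreover have "x \<in> cls x"
    using assms by (simp add: cls_def)
  ultimately show "cls_ge (cls x) (cls y)"
    unfolding cls_ge_def by blast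
qed

end
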